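(* Let $G=(V\cup\{O\},E)$ be a connected, unweighted, undirected graph, where $V$ is a set of $n$ terminals and $O\notin V$ is the depot, and let $k\in[1,n]$ be an arbitrary integer tour capacity. Let $\mathrm{opt}$ be the minimum cost of a feasible solution to the graphic CVRP on this instance, and let $\mathrm{opt}_{\mathrm{TSP}}$ be the minimum cost of a traveling salesman tour on $V\cup\{O\}$. Let $\beta\geq\frac12$ and $\gamma\geq 0$, and let $S$ be a traveling salesman tour on $V\cup\{O\}$ of cost at most $\beta\cdot n+\gamma\cdot\mathrm{opt}_{\mathrm{TSP}}$. Then the iterated tour partitioning algorithm applied to $S$ outputs a feasible solution to the graphic CVRP of cost at most $\left(\beta+\gamma+\frac12\right)\cdot\mathrm{opt}$.
   Context: Distances are graphic: the distance between two vertices is the number of edges on a shortest path between them in $G$; $\mathrm{dist}(v)$ denotes the distance from $v$ to $O$. A tour is a closed walk in $G$ starting and ending at $O$; its cost is its number of edges (with multiplicity). In the graphic CVRP, each terminal has unit demand; a feasible solution is a set of tours, together with an assignment of each terminal to exactly one tour visiting it, such that each tour is assigned at most $k$ terminals; the cost is the total cost of the tours and the goal is to minimize it. A traveling salesman tour on $V\cup\{O\}$ is a closed walk in $G$ visiting every vertex of $V\cup\{O\}$; its cost is its number of edges. The iterated tour partitioning (ITP) algorithm applied to a traveling salesman tour $S$: order the terminals $v_1,\dots,v_n$ by their first occurrence along $S$ starting from $O$; for each offset $i\in\{1,\dots,k\}$, cut this sequence into consecutive segments, the first containing the first $i$ terminals and each subsequent one containing the next $k$ terminals (the last possibly fewer);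 each segment, taken as the portion of $S$ from its first to its last terminal, is turned into a tour by joining both endpoints to $O$ via shortest paths, and covers the terminals of that segment; among the $k$ resulting solutions, output one of minimum cost. *)

theory Defs
  imports Complex_Main
begin

text \<open>The graph G = (V \<union> {dep}, E) is given by a vertex set V of terminals, a depot dep,
 and a symmetric irreflexive adjacency relation E on V \<union> {dep}.\<close>

definition walk :: "('a \<Rightarrow> 'a \<Rightarrow> bool) \<Rightarrow> 'a set \<Rightarrow> 'a \<Rightarrow> 'a list \<Rightarrow> bool" where
  "walk E V dep p \<longleftrightarrow> p \<noteq> [] \<and> set p \<subseteq> insert dep V \<and>
     (\<forall>i. i + 1 < length p \<longrightarrow> E (p ! i) (p ! (i + 1)))"

definition walk_cost :: "'a list \<Rightarrow> nat" where
  "walk_cost p = length p - 1"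

definition connected_graph :: "('a \<Rightarrow> 'a \<Rightarrow> bool) \<Rightarrow> 'a set \<Rightarrow> 'a \<Rightarrow> bool" where
  "connected_graph E V dep \<longleftrightarrow>
     (\<forall>u\<in>insert dep V. \<forall>v\<in>insert dep V. \<exists>p. walk E V dep p \<and> hd p = u \<and> last p = v)"

definition gdist :: "('a \<Rightarrow> 'a \<Rightarrow> bool) \<Rightarrow> 'a set \<Rightarrow> 'a \<Rightarrow> 'a \<Rightarrow> 'a \<Rightarrow> nat" where
  "gdist E V dep u v = (LEAST m. \<exists>p. walk E V dep p \<and> hd p = u \<and> last p = v \<and> walk_cost p = m)"

definition shortest_path :: "('a \<Rightarrow> 'a \<Rightarrow> bool) \<Rightarrow> 'a set \<Rightarrow> 'a \<Rightarrow> 'a \<Rightarrow> 'a \<Rightarrow> 'a list" where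
  "shortest_path E V dep u v = (SOME p. walk E V dep p \<and> hd p = u \<and> last p = v \<and>
       walk_cost p = gdist E V dep u v)"

definition tour :: "('a \<Rightarrow> 'a \<Rightarrow> bool) \<Rightarrow> 'a set \<Rightarrow> 'a \<Rightarrow> 'a list \<Rightarrow> bool" where
  "tour E V dep p \<longleftrightarrow> walk E V dep p \<and> hd p = dep \<and> last p = dep"

text \<open>A CVRP solution: a list of tours together with an assignment of each terminal
 to the index of a tour.\<close>
type_synonym 'a cvrp_sol = "'a list list \<times> ('a \<Rightarrow> nat)"

definition cvrp_feasible :: "('a \<Rightarrow> 'a \<Rightarrow> bool) \<Rightarrow> 'a set \<Rightarrow> 'a \<Rightarrow> nat \<Rightarrow> 'a cvrp_sol \<Rightarrow> bool" where
  "cvrp_feasible E V dep k sol \<longleftrightarrow>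
     (\<forall>t\<in>set (fst sol). tour E V dep t) \<and>
     (\<forall>v\<in>V. snd sol v < length (fst sol) \<and> v \<in> set (fst sol ! snd sol v)) \<and>
     (\<forall>j<length (fst sol). card {v\<in>V. snd sol v = j} \<le> k)"

definition sol_cost :: "'a cvrp_sol \<Rightarrow> nat" where
  "sol_cost sol = sum_list (map walk_cost (fst sol))"

definition cvrp_opt :: "('a \<Rightarrow> 'a \<Rightarrow> bool) \<Rightarrow> 'a set \<Rightarrow> 'a \<Rightarrow> nat \<Rightarrow> nat" where
  "cvrp_opt E V dep k = (LEAST c. \<exists>sol. cvrp_feasible E V dep k sol \<and> sol_cost sol = c)"

definition tsp_tour :: "('a \<Rightarrow> 'a \<Rightarrow> bool) \<Rightarrow> 'a set \<Rightarrow> 'a \<Rightarrow> 'a list \<Rightarrow> bool" where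
  "tsp_tour E V dep p \<longleftrightarrow> tour E V dep p \<and> insert dep V \<subseteq> set p"

definition tsp_opt :: "('a \<Rightarrow> 'a \<Rightarrow> bool) \<Rightarrow> 'a set \<Rightarrow> 'a \<Rightarrow> nat" where
  "tsp_opt E V dep = (LEAST c. \<exists>p. tsp_tour E V dep p \<and> walk_cost p = c)"

text \<open>Positions in S of the first occurrences of terminals, in increasing order;
 the terminal sequence v_1..v_n is the list of entries of S at these positions.\<close>
definition first_positions :: "'a set \<Rightarrow> 'a list \<Rightarrow> nat list" where
  "first_positions V S = [j \<leftarrow> [0..<length S]. S ! j \<in> V \<and> (\<forall>j'<j. S ! j' \<noteq> S ! j)]"

fun chunks :: "nat \<Rightarrow> 'b list \<Rightarrow> 'b list list" where
  "chunks k [] = []"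
| "chunks k (x # xs) = (if k = 0 then [x # xs] else take k (x # xs) # chunks k (drop k (x # xs)))"

definition itp_segments :: "'a set \<Rightarrow> nat \<Rightarrow> 'a list \<Rightarrow> nat \<Rightarrow> nat list list" where
  "itp_segments V k S i =
     (let P = first_positions V S in take i P # chunks k (drop i P))"

definition segment_tour :: "('a \<Rightarrow> 'a \<Rightarrow> bool) \<Rightarrow> 'a set \<Rightarrow> 'a \<Rightarrow> 'a list \<Rightarrow> nat list \<Rightarrow> 'a list" where
  "segment_tour E V dep S seg =
     (let a = hd seg; b = last seg in
      shortest_path E V dep dep (S ! a) @ tl (take (b - a + 1) (drop a S))
        @ tl (shortest_path E V dep (S ! b) dep))"

definition itp_solution :: "('a \<Rightarrow> 'a \<Rightarrow> bool) \<Rightarrow> 'a set \<Rightarrow> 'a \<Rightarrow> nat \<Rightarrow> 'a list \<Rightarrow> nat \<Rightarrow> 'a cvrp_sol" where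
  "itp_solution E V dep k S i =
     (let segs = itp_segments V k S i in
      (map (segment_tour E V dep S) segs,
       \<lambda>v. LEAST m. m < length segs \<and> v \<in> (\<lambda>j. S ! j) ` set (segs ! m)))"

definition itp :: "('a \<Rightarrow> 'a \<Rightarrow> bool) \<Rightarrow> 'a set \<Rightarrow> 'a \<Rightarrow> nat \<Rightarrow> 'a list \<Rightarrow> 'a cvrp_sol" where
  "itp E V dep k S = itp_solution E V dep k S
     (ARG_MIN (\<lambda>i. sol_cost (itp_solution E V dep k S i)) i. i \<in> {1..k})"

end

theory Submission
  imports Defs
begin

text \<open>Averaging over the k offsets: every pair of consecutive terminals of S is separated in
  exactly one of the k ITP solutions, and separating the terminals at positions a < b of S costs
  dist(S!a) + dist(S!b) - (b - a) more than following S.  Hence the k solutions cost at most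
  (k - 1) cost(S) + 2 D in total, where D is the sum of dist(v) over all terminals, and the cheapest
  one costs at most a k-th of that.

  On the other side, a tour of length L serving c terminals visits them at distinct positions
  0 < p < L, and the terminal at position p has dist \<le> min p (L - p); summing gives
  4 \<Sum> dist \<le> 2cL - c(c - 1).  For c \<le> min k L and \<beta> \<ge> 1/2 this implies
  (k - 1) \<beta> c + 2 \<Sum> dist \<le> (\<beta> + 1/2) k L, and summing over the tours of an optimal solution
  gives (k - 1) \<beta> n + 2 D \<le> (\<beta> + 1/2) k opt.  Together with cost(S) \<le> \<beta> n + \<gamma> opt_TSP and
  opt_TSP \<le> opt this gives the ratio \<beta> + \<gamma> + 1/2.\<close>

section \<open>Walks and graphic distances\<close>

lemma walk_iff_successively:
  "walk E V dep p \<longleftrightarrow> p \<noteq> [] \<and> set p \<subseteq> insert dep V \<and> successively E p"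
  by (simp add: walk_def successively_conv_nth)

lemma successively_take: "successively P xs \<Longrightarrow> successively P (take n xs)"
  by (metis append_take_drop_id successively_append_iff)

lemma successively_drop: "successively P xs \<Longrightarrow> successively P (drop n xs)"
  by (metis append_take_drop_id successively_append_iff)

lemma set_append_tl:
  "p \<noteq> [] \<Longrightarrow> q \<noteq> [] \<Longrightarrow> last p = hd q \<Longrightarrow> set (p @ tl q) = set p \<union> set q"
  by (cases q) auto

lemma walk_append_tl:
  assumes p: "walk E V dep p" and q: "walk E V dep q" and pq: "last p = hd q"
  shows "walk E V dep (p @ tl q)" and "hd (p @ tl q) = hd p" and "last (p @ tl q) = last q"
    and "walk_cost (p @ tl q) = walk_cost p + walk_cost q"
proof -
  obtain x ys where q_eq: "q = x # ys" and "p \<noteq> []"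
    using p q by (cases q) (auto simp: walk_iff_successively)
  then show "hd (p @ tl q) = hd p" and "last (p @ tl q) = last q"
    and "walk_cost (p @ tl q) = walk_cost p + walk_cost q"
    using pq by (auto simp: walk_cost_def Suc_leI)
  show "walk E V dep (p @ tl q)"
    using p q pq q_eq
    by (auto simp: walk_iff_successively successively_append_iff successively_Cons)
qed

lemma walk_rev:
  assumes "\<forall>u v. E u v \<longrightarrow> E v u" and "walk E V dep p"
  shows "walk E V dep (rev p)"
  using assms by (auto simp: walk_iff_successively elim: successively_mono)

lemma walk_slice:
  assumes "walk E V dep p" and "a \<le> b" and "b < length p"
  defines "q \<equiv> take (b - a + 1) (drop a p)"
  shows "walk E V dep q" and "hd q = p ! a" and "last q = p ! b" and "walk_cost q = b - a"
proof -
  have len: "length q = b - a + 1"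
    using assms by (simp add: q_def)
  then show "hd q = p ! a" and "last q = p ! b" and "walk_cost q = b - a"
    using assms by (auto simp: q_def hd_conv_nth last_conv_nth walk_cost_def)
  show "walk E V dep q"
    using assms(1) len unfolding q_def walk_iff_successively
    by (auto intro: successively_take successively_drop dest: in_set_takeD in_set_dropD)
qed

lemma tour_length: "tour E V dep t \<Longrightarrow> length t = Suc (walk_cost t)"
  by (simp add: tour_def walk_def walk_cost_def)

lemma tour_ends:
  assumes "tour E V dep t"
  shows "t ! 0 = dep" and "t ! walk_cost t = dep"
  using assms tour_length[OF assms]
  by (auto simp: tour_def walk_def hd_conv_nth last_conv_nth)

lemma tour_foldr_append:
  assumes "\<forall>t\<in>set ts. tour E V dep t"
  defines "w \<equiv> foldr (\<lambda>t w. t @ tl w) ts [dep]"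
  shows "tour E V dep w" and "walk_cost w = (\<Sum>t\<leftarrow>ts. walk_cost t)"
    and "set w = insert dep (\<Union>t\<in>set ts. set t)"
  using assms unfolding w_def
proof (induction ts)
  case (Cons t ts)
  let ?w = "foldr (\<lambda>t w. t @ tl w) ts [dep]"
  have t: "walk E V dep t" "hd t = dep" "last t = dep"
    and w: "walk E V dep ?w" "hd ?w = dep" "last ?w = dep"
    using Cons by (auto simp: tour_def)
  then have "t \<noteq> []" "?w \<noteq> []" "last t = hd ?w"
    by (auto simp: walk_def)
  note glued = walk_append_tl[OF t(1) w(1) \<open>last t = hd ?w\<close>]
  show "tour E V dep (foldr (\<lambda>t w. t @ tl w) (t # ts) [dep])"
    using glued t w by (simp add: tour_def)
  show "walk_cost (foldr (\<lambda>t w. t @ tl w) (t # ts) [dep]) = (\<Sum>t\<leftarrow>t # ts. walk_cost t)"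
    using glued Cons by simp
  show "set (foldr (\<lambda>t w. t @ tl w) (t # ts) [dep]) = insert dep (\<Union>t\<in>set (t # ts). set t)"
    using set_append_tl[OF \<open>t \<noteq> []\<close> \<open>?w \<noteq> []\<close> \<open>last t = hd ?w\<close>] Cons by auto
qed (simp_all add: tour_def walk_def walk_cost_def)

lemma tsp_opt_le_sol_cost:
  assumes "cvrp_feasible E V dep k sol"
  shows "tsp_opt E V dep \<le> sol_cost sol"
proof -
  define w where "w = foldr (\<lambda>t w. t @ tl w) (fst sol) [dep]"
  have tours: "\<forall>t\<in>set (fst sol). tour E V dep t" and "V \<subseteq> (\<Union>t\<in>set (fst sol). set t)"
    using assms unfolding cvrp_feasible_def by (blast, meson UN_I nth_mem subsetI)
  then have "tsp_tour E V dep w" and "walk_cost w = sol_cost sol"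
    using tour_foldr_append[OF tours, folded w_def] unfolding tsp_tour_def sol_cost_def by auto
  then show ?thesis
    unfolding tsp_opt_def by (intro Least_le) blast
qed

lemma gdist_le_walk_cost:
  "walk E V dep p \<Longrightarrow> gdist E V dep (hd p) (last p) \<le> walk_cost p"
  unfolding gdist_def by (rule Least_le) blast

lemma gdist_commute:
  assumes "\<forall>u v. E u v \<longrightarrow> E v u"
  shows "gdist E V dep u v = gdist E V dep v u"
proof -
  have reverse: "\<exists>q. walk E V dep q \<and> hd q = y \<and> last q = x \<and> walk_cost q = m"
    if "walk E V dep p" "hd p = x" "last p = y" "walk_cost p = m" for p x y m
    using that walk_rev[OF assms, of V dep p]
    by (intro exI[of _ "rev p"]) (auto simp: hd_rev last_rev walk_cost_def)
  have "(\<exists>p. walk E V dep p \<and> hd p = u \<and> last p = v \<and> walk_cost p = m) \<longleftrightarrow>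
        (\<exists>p. walk E V dep p \<and> hd p = v \<and> last p = u \<and> walk_cost p = m)" for m
    by (meson reverse)
  then show ?thesis
    unfolding gdist_def by simp
qed

section \<open>A lower bound on the CVRP optimum\<close>

lemma sum_min_dist_to_ends:
  fixes A :: "nat set"
  assumes "finite A" and "A \<subseteq> {..L}"
  shows "4 * (\<Sum>p\<in>A. min p (L - p)) + card A * (card A - 1) \<le> 2 * card A * L"
  using assms
proof (induction A rule: finite_remove_induct)
  case empty
  then show ?case by simp
next
  case (remove A)
  define m where "m p = min p (L - p)" for p
  obtain p0 where p0: "p0 \<in> A" and p0_min: "\<forall>p\<in>A. m p0 \<le> m p"
    using ex_is_arg_min_if_finite[OF \<open>finite A\<close> \<open>A \<noteq> {}\<close>, of m]
    by (auto simp: is_arg_min_linorder)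
  have "A \<subseteq> {m p0..L - m p0}"
    using p0_min remove.prems by (force simp: m_def)
  then have "card A \<le> Suc (L - m p0) - m p0"
    by (metis card_atLeastAtMost card_mono finite_atLeastAtMost)
  moreover have "2 * m p0 \<le> L"
    by (simp add: m_def)
  ultimately have card_A: "card A + 2 * m p0 \<le> Suc L"
    by linarith
  obtain c where c: "card A = Suc c"
    using remove.hyps by (metis card_Suc_Diff1 p0)
  have "card (A - {p0}) = c"
    using c p0 remove.hyps(1) by simp
  then have IH: "4 * (\<Sum>p\<in>A - {p0}. m p) + c * (c - 1) \<le> 2 * c * L"
    using remove.IH[OF p0] remove.prems by (auto simp: m_def)
  have "(\<Sum>p\<in>A. m p) = m p0 + (\<Sum>p\<in>A - {p0}. m p)"
    using p0 remove.hyps(1) by (simp add: sum.remove)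
  moreover have "Suc c * c = c * (c - 1) + 2 * c"
    by (cases c) auto
  ultimately show ?case
    using IH card_A c by (simp add: m_def algebra_simps)
qed

locale connected_ugraph =
  fixes E :: "'a \<Rightarrow> 'a \<Rightarrow> bool" and V :: "'a set" and dep :: 'a
  assumes sym: "\<forall>u v. E u v \<longrightarrow> E v u"
    and connected: "connected_graph E V dep"
begin

abbreviation d :: "'a \<Rightarrow> nat" where
  "d v \<equiv> gdist E V dep dep v"

lemma shortest_path:
  assumes "u \<in> insert dep V" and "v \<in> insert dep V"
  defines "p \<equiv> shortest_path E V dep u v"
  shows "walk E V dep p" and "hd p = u" and "last p = v" and "walk_cost p = gdist E V dep u v"
proof -
  have "\<exists>m q. walk E V dep q \<and> hd q = u \<and> last q = v \<and> walk_cost q = m"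
    using connected assms(1,2) unfolding connected_graph_def by blast
  then have "\<exists>q. walk E V dep q \<and> hd q = u \<and> last q = v \<and> walk_cost q = gdist E V dep u v"
    unfolding gdist_def by (rule LeastI_ex)
  then have "walk E V dep p \<and> hd p = u \<and> last p = v \<and> walk_cost p = gdist E V dep u v"
    unfolding p_def shortest_path_def by (rule someI_ex)
  then show "walk E V dep p" and "hd p = u" and "last p = v" and "walk_cost p = gdist E V dep u v"
    by auto
qed

lemma tour_nth_dist:
  assumes t: "tour E V dep t" and i: "i < length t"
  shows "d (t ! i) \<le> i" and "d (t ! i) \<le> walk_cost t - i"
proof -
  have walk: "walk E V dep t"
    using t by (simp add: tour_def)
  note prefix = walk_slice[OF walk le0 i]
  show "d (t ! i) \<le> i"
    using gdist_le_walk_cost[OF prefix(1)] prefix(2-4) tour_ends(1)[OF t] by simp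
  have "i \<le> walk_cost t" "walk_cost t < length t"
    using i tour_length[OF t] by simp_all
  note suffix = walk_slice[OF walk this]
  have "gdist E V dep (t ! i) dep \<le> walk_cost t - i"
    using gdist_le_walk_cost[OF suffix(1)] suffix(2-4) tour_ends(2)[OF t] by simp
  then show "d (t ! i) \<le> walk_cost t - i"
    by (simp add: gdist_commute[OF sym])
qed

lemma tour_dist_sum_bound:
  assumes t: "tour E V dep t" and T: "T \<subseteq> V" "T \<subseteq> set t" and dep: "dep \<notin> V"
  shows "4 * (\<Sum>v\<in>T. d v) + card T * (card T - 1) \<le> 2 * card T * walk_cost t"
    and "card T \<le> walk_cost t"
proof -
  define L where "L = walk_cost t"
  define pos where "pos v = (SOME i. i < length t \<and> t ! i = v)" for v
  have pos: "pos v < length t \<and> t ! pos v = v" if "v \<in> T" for v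
  proof -
    have "\<exists>i. i < length t \<and> t ! i = v"
      using T that by (auto simp: in_set_conv_nth)
    then show ?thesis
      unfolding pos_def by (rule someI_ex)
  qed
  have inj: "inj_on pos T"
    by (rule inj_onI) (metis pos)
  have pos_inner: "pos v \<in> {1..<L}" if "v \<in> T" for v
  proof -
    have "t ! pos v \<noteq> dep"
      using pos[OF that] that T dep by auto
    then have "pos v \<noteq> 0" "pos v \<noteq> L"
      using tour_ends[OF t] L_def by metis+
    then show ?thesis
      using pos[OF that] tour_length[OF t] L_def by auto
  qed
  then have "pos ` T \<subseteq> {1..<L}"
    by blast
  then have pos_T: "pos ` T \<subseteq> {..L}" and "card (pos ` T) \<le> card {1..<L}"
    by (fastforce, metis card_mono finite_atLeastLessThan)
  then show "card T \<le> walk_cost t"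
    by (simp add: card_image[OF inj] L_def)
  have "(\<Sum>v\<in>T. d v) \<le> (\<Sum>v\<in>T. min (pos v) (L - pos v))"
    using tour_nth_dist[OF t] pos unfolding L_def by (intro sum_mono) (metis min.boundedI)
  also have "\<dots> = (\<Sum>p\<in>pos ` T. min p (L - p))"
    by (simp add: sum.reindex[OF inj])
  finally have "4 * (\<Sum>v\<in>T. d v) \<le> 4 * (\<Sum>p\<in>pos ` T. min p (L - p))"
    by simp
  moreover have "finite (pos ` T)"
    using pos_T finite_subset by blast
  ultimately show "4 * (\<Sum>v\<in>T. d v) + card T * (card T - 1) \<le> 2 * card T * walk_cost t"
    using sum_min_dist_to_ends[OF _ pos_T] by (simp add: card_image[OF inj] L_def)
qed

lemma tour_cost_lower_bound:
  assumes t: "tour E V dep t" and T: "T \<subseteq> V" "T \<subseteq> set t" and "dep \<notin> V"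
    and "card T \<le> k" and "1/2 \<le> \<beta>"
  shows "(real k - 1) * \<beta> * card T + 2 * (\<Sum>v\<in>T. real (d v)) \<le> (\<beta> + 1/2) * k * walk_cost t"
proof -
  define c where "c = real (card T)"
  define s where "s = (\<Sum>v\<in>T. real (d v))"
  define L where "L = real (walk_cost t)"
  define A where "A = (\<beta> - 1/2) * (k * (L - c) + c)"
  define B where "B = (k - c) * (2 * L - c)"
  note bound = tour_dist_sum_bound[OF t T \<open>dep \<notin> V\<close>]
  have "real (card T * (card T - 1)) = c * (c - 1)"
    unfolding c_def by (cases "card T") (auto simp: algebra_simps)
  then have "4 * s + c * (c - 1) \<le> 2 * c * L"
    using bound(1) unfolding s_def c_def L_def
    by (metis of_nat_le_iff of_nat_add of_nat_mult of_nat_numeral of_nat_sum)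
  moreover have "0 \<le> A" and "0 \<le> B"
    using bound(2) \<open>card T \<le> k\<close> \<open>1/2 \<le> \<beta>\<close> by (simp_all add: A_def B_def c_def L_def)
  moreover have "(\<beta> + 1/2) * k * L - ((real k - 1) * \<beta> * c + 2 * s) =
      A + B / 2 + (2 * c * L - c * (c - 1) - 4 * s) / 2"
    by (simp add: A_def B_def field_simps)
  ultimately show ?thesis
    unfolding c_def s_def L_def by argo
qed

lemma cvrp_cost_lower_bound:
  assumes feasible: "cvrp_feasible E V dep k sol"
    and "finite V" and "dep \<notin> V" and "1/2 \<le> \<beta>"
  shows "(real k - 1) * \<beta> * card V + 2 * (\<Sum>v\<in>V. real (d v)) \<le> (\<beta> + 1/2) * k * sol_cost sol"
proof -
  define m where "m = length (fst sol)"
  define T where "T j = {v\<in>V. snd sol v = j}" for j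
  have tours: "\<And>j. j < m \<Longrightarrow> tour E V dep (fst sol ! j)"
    and assigned: "\<And>v. v \<in> V \<Longrightarrow> snd sol v < m \<and> v \<in> set (fst sol ! snd sol v)"
    and capacity: "\<And>j. j < m \<Longrightarrow> card (T j) \<le> k"
    using feasible unfolding cvrp_feasible_def m_def T_def by auto
  have group: "(\<Sum>v\<in>V. f v) = (\<Sum>j<m. \<Sum>v\<in>T j. f v)" for f :: "'a \<Rightarrow> real"
    unfolding T_def using assigned by (intro sum.group[symmetric]) (auto simp: \<open>finite V\<close>)
  have "(real k - 1) * \<beta> * card V + 2 * (\<Sum>v\<in>V. real (d v)) =
      (\<Sum>j<m. (real k - 1) * \<beta> * card (T j) + 2 * (\<Sum>v\<in>T j. real (d v)))"
    using group[of "\<lambda>_. 1"] group[of "\<lambda>v. real (d v)"]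
    by (simp add: sum.distrib sum_distrib_left)
  also have "\<dots> \<le> (\<Sum>j<m. (\<beta> + 1/2) * k * walk_cost (fst sol ! j))"
    using assigned \<open>dep \<notin> V\<close> \<open>1/2 \<le> \<beta>\<close>
    by (intro sum_mono tour_cost_lower_bound[OF tours _ _ _ capacity]) (auto simp: T_def)
  also have "\<dots> = (\<beta> + 1/2) * k * sol_cost sol"
    by (simp add: sol_cost_def sum_list_sum_nth atLeast0LessThan m_def sum_distrib_left)
  finally show ?thesis .
qed

end

section \<open>Cutting a list into consecutive segments\<close>

lemma sorted_between_hd_last:
  fixes c :: "'b::linorder list"
  assumes "sorted c" and "x \<in> set c"
  shows "hd c \<le> x" and "x \<le> last c"
proof -
  obtain i where i: "i < length c" "c ! i = x"
    using assms(2) by (auto simp: in_set_conv_nth)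
  then have "c \<noteq> []"
    by auto
  then show "hd c \<le> x" and "x \<le> last c"
    using i sorted_nth_mono[OF assms(1), of 0 i] sorted_nth_mono[OF assms(1), of i "length c - 1"]
    by (simp_all add: hd_conv_nth last_conv_nth)
qed

lemma sorted_wrt_concat_member:
  assumes "sorted_wrt R (concat cs)" and "c \<in> set cs"
  shows "sorted_wrt R c"
proof -
  obtain us ws where "cs = us @ c # ws"
    using assms(2) by (meson split_list)
  then show ?thesis
    using assms(1) by (simp add: sorted_wrt_append)
qed

lemma set_first_positions:
  "j \<in> set (first_positions V S) \<longleftrightarrow> j < length S \<and> S ! j \<in> V \<and> (\<forall>i<j. S ! i \<noteq> S ! j)"
  by (auto simp: first_positions_def)

lemma sorted_first_positions: "sorted_wrt (<) (first_positions V S)"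
  unfolding first_positions_def by (intro sorted_wrt_filter) (simp add: sorted_wrt_upt)

lemma distinct_map_nth_first_positions: "distinct (map ((!) S) (first_positions V S))"
proof -
  have "inj_on ((!) S) (set (first_positions V S))"
    by (rule inj_onI) (metis set_first_positions linorder_neqE_nat)
  then show ?thesis
    by (simp add: distinct_map first_positions_def)
qed

lemma nth_image_first_positions: "(!) S ` set (first_positions V S) = V \<inter> set S"
proof (intro equalityI subsetI)
  fix v assume "v \<in> V \<inter> set S"
  define j where "j = (LEAST j. j < length S \<and> S ! j = v)"
  have "\<exists>j. j < length S \<and> S ! j = v"
    using \<open>v \<in> V \<inter> set S\<close> by (simp add: in_set_conv_nth)
  then have j: "j < length S \<and> S ! j = v"
    unfolding j_def by (rule LeastI_ex)
  have "\<forall>i<j. S ! i \<noteq> S ! j"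
    using not_less_Least j unfolding j_def by fastforce
  then show "v \<in> (!) S ` set (first_positions V S)"
    using j \<open>v \<in> V \<inter> set S\<close> by (force simp: set_first_positions)
qed (auto simp: set_first_positions)

lemma mod_eq_less_imp_add_le:
  fixes a b k :: nat
  assumes "a mod k = b mod k" and "a < b"
  shows "a + k \<le> b"
proof -
  obtain q where "b = a + k * q"
    using mod_eq_nat2E[OF assms(1)] assms(2) by auto
  then show ?thesis
    using assms(2) by (cases q) auto
qed

lemma chunks_nonempty: "0 < k \<Longrightarrow> xs \<noteq> [] \<Longrightarrow> chunks k xs = take k xs # chunks k (drop k xs)"
  by (cases xs) auto

lemma chunks_bounded:
  "0 < k \<Longrightarrow> concat (chunks k xs) = xs \<and> (\<forall>c\<in>set (chunks k xs). c \<noteq> [] \<and> length c \<le> k)"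
  by (induction k xs rule: chunks.induct) auto

lemma sum_list_chunks_glue:
  fixes h :: "'a list \<Rightarrow> 'b::comm_monoid_add"
  assumes glue: "\<And>ys zs. ys \<noteq> [] \<Longrightarrow> zs \<noteq> [] \<Longrightarrow> h ys + h zs = h (ys @ zs) + g (last ys) (hd zs)"
    and "0 < r" and "r \<le> k" and "s < length xs"
  shows "(\<Sum>c\<leftarrow>take r (drop s xs) # chunks k (drop (s + r) xs). h c) =
    h (drop s xs) +
      (\<Sum>j | s \<le> j \<and> j < length xs - 1 \<and> Suc j mod k = (s + r) mod k. g (xs ! j) (xs ! Suc j))"
  using assms(2-)
proof (induction "length xs - s" arbitrary: s r rule: less_induct)
  case less
  define cuts where
    "cuts s r = {j. s \<le> j \<and> j < length xs - 1 \<and> Suc j mod k = (s + r) mod k}" for s r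
  have no_cut: False if "j \<in> cuts s r" and "j < s + r - 1" for j
  proof -
    have "Suc j mod k = (s + r) mod k" and "Suc j < s + r"
      using that by (auto simp: cuts_def)
    then show False
      using mod_eq_less_imp_add_le that(1) less.prems by (fastforce simp: cuts_def)
  qed
  show ?case
  proof (cases "length xs \<le> s + r")
    case True
    then have "j < s + r - 1" if "j \<in> cuts s r" for j
      using that by (auto simp: cuts_def)
    then have "cuts s r = {}"
      using no_cut by blast
    then show ?thesis
      unfolding cuts_def[symmetric] using True by simp
  next
    case False
    have "0 < k" using less.prems by simp
    have split: "take r (drop s xs) @ drop (s + r) xs = drop s xs"
      by (metis append_take_drop_id drop_drop add.commute)
    have "last (take r (drop s xs)) = xs ! (s + r - 1)" and "hd (drop (s + r) xs) = xs ! (s + r)"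
      using False less.prems by (auto simp: last_conv_nth hd_drop_conv_nth min_def)
    then have glued: "h (take r (drop s xs)) + h (drop (s + r) xs) =
        h (drop s xs) + g (xs ! (s + r - 1)) (xs ! Suc (s + r - 1))"
      using glue[of "take r (drop s xs)" "drop (s + r) xs"] False less.prems split by simp
    have chunks_eq:
      "take k (drop (s + r) xs) # chunks k (drop (s + r + k) xs) = chunks k (drop (s + r) xs)"
      using chunks_nonempty[OF \<open>0 < k\<close>, of "drop (s + r) xs"] False by (simp add: add.commute)
    have IH: "(\<Sum>c\<leftarrow>chunks k (drop (s + r) xs). h c) =
        h (drop (s + r) xs) + (\<Sum>j\<in>cuts (s + r) k. g (xs ! j) (xs ! Suc j))"
      using less.hyps[of "s + r" k, folded cuts_def, unfolded chunks_eq] False less.prems by simp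
    have "cuts s r = insert (s + r - 1) (cuts (s + r) k)"
      using no_cut False less.prems by (fastforce simp: cuts_def)
    moreover have "s + r - 1 \<notin> cuts (s + r) k" and "finite (cuts (s + r) k)"
      using less.prems by (auto simp: cuts_def)
    ultimately show ?thesis
      unfolding cuts_def[symmetric] using IH glued by (simp add: add.assoc[symmetric])
  qed
qed

lemma sum_over_residue_classes:
  assumes "0 < k"
  shows "(\<Sum>i\<in>{1..k}. \<Sum>j | j < m \<and> Suc j mod k = i mod k. G j) = (\<Sum>j<m. G j)"
proof -
  have mod_inj: "x = y" if "x \<in> {1..k}" "y \<in> {1..k}" "x mod k = y mod k" for x y
    using mod_eq_less_imp_add_le[OF that(3)] mod_eq_less_imp_add_le[OF that(3)[symmetric]] that(1,2)
    by (cases x y rule: linorder_cases) auto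
  have "Suc j mod k = i mod k \<longleftrightarrow> Suc (j mod k) = i" if "i \<in> {1..k}" for i j
    using mod_inj[OF _ that, of "Suc (j mod k)"] assms by (auto simp: mod_Suc_eq Suc_leI)
  then have "(\<Sum>i\<in>{1..k}. \<Sum>j | j < m \<and> Suc j mod k = i mod k. G j) =
      (\<Sum>i\<in>{1..k}. \<Sum>j | j \<in> {..<m} \<and> Suc (j mod k) = i. G j)"
    by (intro sum.cong refl) auto
  also have "\<dots> = (\<Sum>j<m. G j)"
    using assms by (intro sum.group) (auto simp: Suc_leI)
  finally show ?thesis .
qed

section \<open>Iterated tour partitioning\<close>

locale itp_instance = connected_ugraph E V dep for E :: "'a \<Rightarrow> 'a \<Rightarrow> bool" and V dep +
  fixes S :: "'a list" and k :: nat
  assumes tsp_S: "tsp_tour E V dep S" and V_nonempty: "V \<noteq> {}" and k_pos: "0 < k"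
begin

abbreviation P :: "nat list" where
  "P \<equiv> first_positions V S"

lemma nth_image_P: "(!) S ` set P = V"
  using nth_image_first_positions[of S V] tsp_S by (auto simp: tsp_tour_def)

lemma P_nonempty: "P \<noteq> []"
  using nth_image_P V_nonempty by auto

lemma P_terminal: "p \<in> set P \<Longrightarrow> p < length S \<and> S ! p \<in> V"
  by (simp add: set_first_positions)

definition segment_cost :: "nat list \<Rightarrow> real" where
  "segment_cost c = d (S ! hd c) + (real (last c) - real (hd c)) + d (S ! last c)"

definition cut_cost :: "nat \<Rightarrow> nat \<Rightarrow> real" where
  "cut_cost a b = d (S ! a) + d (S ! b) - (real b - real a)"

lemma segment_cost_append:
  "ys \<noteq> [] \<Longrightarrow> zs \<noteq> [] \<Longrightarrow>
    segment_cost ys + segment_cost zs = segment_cost (ys @ zs) + cut_cost (last ys) (hd zs)"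
  by (simp add: segment_cost_def cut_cost_def)

lemma segment_tour:
  assumes c: "c \<noteq> []" "sorted_wrt (<) c" "set c \<subseteq> set P"
  defines "t \<equiv> segment_tour E V dep S c"
  shows "tour E V dep t" and "real (walk_cost t) = segment_cost c" and "(!) S ` set c \<subseteq> set t"
proof -
  define a b where "a = hd c" and "b = last c"
  have sorted: "sorted c"
    using c(2) by (simp add: strict_sorted_iff)
  then have "a \<le> b"
    using c(1) sorted_between_hd_last[OF sorted] unfolding a_def b_def by simp
  have "a \<in> set P" "b \<in> set P"
    using c unfolding a_def b_def by auto
  then have ab: "b < length S" "S ! a \<in> V" "S ! b \<in> V"
    using P_terminal by auto
  define p q r where "p = shortest_path E V dep dep (S ! a)" and "q = take (b - a + 1) (drop a S)"
    and "r = shortest_path E V dep (S ! b) dep"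
  have t_eq: "t = (p @ tl q) @ tl r"
    unfolding t_def segment_tour_def Let_def p_def q_def r_def a_def b_def by simp
  have mem: "dep \<in> insert dep V" "S ! a \<in> insert dep V" "S ! b \<in> insert dep V"
    using ab by auto
  note p = shortest_path[OF mem(1,2), folded p_def]
  note r = shortest_path[OF mem(3,1), folded r_def]
  have S: "walk E V dep S"
    using tsp_S by (simp add: tsp_tour_def tour_def)
  note q = walk_slice[OF S \<open>a \<le> b\<close> ab(1), folded q_def]
  have pq: "last p = hd q"
    using p q ab by simp
  note pq_walk = walk_append_tl[OF p(1) q(1) pq]
  have pqr: "last (p @ tl q) = hd r"
    using pq_walk(3) q r ab by simp
  note pqr_walk = walk_append_tl[OF pq_walk(1) r(1) pqr]
  show "tour E V dep t"
    unfolding t_eq tour_def using pqr_walk pq_walk p r ab by simp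
  have "walk_cost t = walk_cost p + walk_cost q + walk_cost r"
    using pqr_walk(4) pq_walk(4) t_eq by simp
  then show "real (walk_cost t) = segment_cost c"
    using p r q ab \<open>a \<le> b\<close> by (simp add: segment_cost_def gdist_commute[OF sym] a_def b_def)
  have "(!) S ` set c \<subseteq> set q"
  proof
    fix v assume "v \<in> (!) S ` set c"
    then obtain j where j: "j \<in> set c" "v = S ! j"
      by auto
    then have "a \<le> j" "j \<le> b"
      using sorted_between_hd_last[OF sorted] unfolding a_def b_def by auto
    then have "q ! (j - a) = v" and "j - a < length q"
      using ab j unfolding q_def by auto
    then show "v \<in> set q"
      by (metis nth_mem)
  qed
  moreover have "p \<noteq> []" "q \<noteq> []" "r \<noteq> []" "p @ tl q \<noteq> []"
    using p(1) q(1) r(1) by (auto simp: walk_def)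
  then have "set t = set p \<union> set q \<union> set r"
    unfolding t_eq using set_append_tl[of p q] set_append_tl[of "p @ tl q" r] pq pqr by simp
  ultimately show "(!) S ` set c \<subseteq> set t"
    by blast
qed

lemma itp_segments:
  assumes i: "i \<in> {1..k}"
  shows "concat (itp_segments V k S i) = P"
    and "c \<in> set (itp_segments V k S i) \<Longrightarrow> c \<noteq> [] \<and> length c \<le> k \<and> sorted_wrt (<) c \<and> set c \<subseteq> set P"
proof -
  note chunks = chunks_bounded[OF k_pos, of "drop i P"]
  show concat: "concat (itp_segments V k S i) = P"
    using chunks by (simp add: itp_segments_def Let_def)
  assume c: "c \<in> set (itp_segments V k S i)"
  then have "c \<noteq> [] \<and> length c \<le> k"
    using chunks i P_nonempty by (auto simp: itp_segments_def Let_def)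
  moreover have "sorted_wrt (<) c"
    using sorted_wrt_concat_member[of "(<)"] sorted_first_positions concat c by metis
  moreover have "set c \<subseteq> set (concat (itp_segments V k S i))"
    using c by auto
  then have "set c \<subseteq> set P"
    by (simp only: concat)
  ultimately show "c \<noteq> [] \<and> length c \<le> k \<and> sorted_wrt (<) c \<and> set c \<subseteq> set P"
    by blast
qed

lemma itp_solution_feasible:
  assumes i: "i \<in> {1..k}"
  shows "cvrp_feasible E V dep k (itp_solution E V dep k S i)"
proof -
  define segs where "segs = itp_segments V k S i"
  define assign where "assign = (\<lambda>v. LEAST m. m < length segs \<and> v \<in> (!) S ` set (segs ! m))"
  note seg = itp_segments[OF i, folded segs_def]
  have covered: "\<exists>m. m < length segs \<and> v \<in> (!) S ` set (segs ! m)" if "v \<in> V" for v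
  proof -
    obtain p where "p \<in> set P" "v = S ! p"
      using nth_image_P \<open>v \<in> V\<close> by auto
    then obtain c where "c \<in> set segs" "p \<in> set c"
      using seg(1) by (metis UN_E set_concat)
    then show ?thesis
      using \<open>v = S ! p\<close> by (metis image_eqI in_set_conv_nth)
  qed
  have assign: "assign v < length segs \<and> v \<in> (!) S ` set (segs ! assign v)" if "v \<in> V" for v
    using covered[OF that] unfolding assign_def by (rule LeastI_ex)
  have sol: "itp_solution E V dep k S i = (map (segment_tour E V dep S) segs, assign)"
    by (simp add: itp_solution_def segs_def assign_def Let_def)
  show ?thesis
    unfolding sol cvrp_feasible_def fst_conv snd_conv
  proof (intro conjI ballI allI impI)
    fix t assume "t \<in> set (map (segment_tour E V dep S) segs)"
    then show "tour E V dep t"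
      using seg(2) segment_tour(1) by auto
  next
    fix v assume "v \<in> V"
    note v = assign[OF this]
    then have "segs ! assign v \<noteq> []" "sorted_wrt (<) (segs ! assign v)"
      "set (segs ! assign v) \<subseteq> set P"
      using seg(2)[OF nth_mem] by auto
    then have "(!) S ` set (segs ! assign v) \<subseteq> set (segment_tour E V dep S (segs ! assign v))"
      by (rule segment_tour(3))
    then show "assign v < length (map (segment_tour E V dep S) segs)"
      and "v \<in> set (map (segment_tour E V dep S) segs ! assign v)"
      using v by auto
  next
    fix j assume "j < length (map (segment_tour E V dep S) segs)"
    then have "{v \<in> V. assign v = j} \<subseteq> (!) S ` set (segs ! j)" and "length (segs ! j) \<le> k"
      using assign seg(2)[OF nth_mem] by auto
    then show "card {v \<in> V. assign v = j} \<le> k"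
      by (meson card_image_le card_length card_mono finite_imageI finite_set order_trans)
  qed
qed

lemma itp_solution_cost:
  assumes i: "i \<in> {1..k}"
  shows "real (sol_cost (itp_solution E V dep k S i)) =
    segment_cost P + (\<Sum>j | j < length P - 1 \<and> Suc j mod k = i mod k. cut_cost (P ! j) (P ! Suc j))"
proof -
  have "real (sol_cost (itp_solution E V dep k S i)) = (\<Sum>c\<leftarrow>itp_segments V k S i. segment_cost c)"
    using segment_tour(2) itp_segments(2)[OF i]
    by (simp add: sol_cost_def itp_solution_def Let_def sum_list_of_nat[symmetric] o_def
        cong: map_cong)
  also have "\<dots> = segment_cost P +
      (\<Sum>j | j < length P - 1 \<and> Suc j mod k = i mod k. cut_cost (P ! j) (P ! Suc j))"
    using sum_list_chunks_glue[where h = segment_cost and g = cut_cost, OF segment_cost_append,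
        of i k 0 P] i P_nonempty
    by (simp add: itp_segments_def Let_def)
  finally show ?thesis .
qed

lemma sum_dist_first_positions: "(\<Sum>j<length P. real (d (S ! (P ! j)))) = (\<Sum>v\<in>V. real (d v))"
proof -
  have "(\<Sum>j<length P. real (d (S ! (P ! j)))) = (\<Sum>v\<leftarrow>map ((!) S) P. real (d v))"
    by (simp add: sum_list_sum_nth atLeast0LessThan)
  also have "\<dots> = (\<Sum>v\<in>set (map ((!) S) P). real (d v))"
    by (rule sum_list_distinct_conv_sum_set[OF distinct_map_nth_first_positions])
  finally show ?thesis
    using nth_image_P by simp
qed

text \<open>Separating all consecutive terminals yields one tour per terminal, of cost twice its
  distance.\<close>

lemma segment_cost_plus_all_cuts:
  "segment_cost P + (\<Sum>j<length P - 1. cut_cost (P ! j) (P ! Suc j)) = 2 * (\<Sum>v\<in>V. real (d v))"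
proof -
  obtain m where m: "length P = Suc m"
    using P_nonempty by (cases P) auto
  define D where "D j = real (d (S ! (P ! j)))" for j
  have "segment_cost P = D 0 + (real (P ! m) - real (P ! 0)) + D m"
    using P_nonempty m by (simp add: segment_cost_def D_def hd_conv_nth last_conv_nth)
  moreover have "(\<Sum>j<m. cut_cost (P ! j) (P ! Suc j)) =
      (\<Sum>j<m. D j) + (\<Sum>j<m. D (Suc j)) - (\<Sum>j<m. real (P ! Suc j) - real (P ! j))"
    by (simp add: cut_cost_def D_def sum.distrib sum_subtractf)
  moreover have "(\<Sum>j<m. D j) + D m = (\<Sum>j<Suc m. D j)"
    by simp
  moreover have "(\<Sum>j<m. D (Suc j)) + D 0 = (\<Sum>j<Suc m. D j)"
    by (simp only: sum.lessThan_Suc_shift add.commute)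
  moreover have "(\<Sum>j<Suc m. D j) = (\<Sum>v\<in>V. real (d v))"
    using sum_dist_first_positions m by (simp add: D_def)
  ultimately show ?thesis
    using m sum_lessThan_telescope[of "\<lambda>j. real (P ! j)" m] by simp
qed

lemma sum_itp_solution_costs:
  "(\<Sum>i\<in>{1..k}. real (sol_cost (itp_solution E V dep k S i))) =
    (real k - 1) * segment_cost P + 2 * (\<Sum>v\<in>V. real (d v))"
proof -
  have "(\<Sum>i\<in>{1..k}. real (sol_cost (itp_solution E V dep k S i))) =
      (\<Sum>i\<in>{1..k}. segment_cost P +
        (\<Sum>j | j < length P - 1 \<and> Suc j mod k = i mod k. cut_cost (P ! j) (P ! Suc j)))"
    by (rule sum.cong) (simp_all add: itp_solution_cost)
  also have "\<dots> = real k * segment_cost P + (\<Sum>j<length P - 1. cut_cost (P ! j) (P ! Suc j))"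
    unfolding sum.distrib sum_over_residue_classes[OF k_pos] by simp
  finally show ?thesis
    using segment_cost_plus_all_cuts by (simp add: algebra_simps)
qed

lemma segment_cost_le_walk_cost: "segment_cost P \<le> real (walk_cost S)"
proof -
  have S: "tour E V dep S"
    using tsp_S by (simp add: tsp_tour_def)
  have "hd P \<in> set P" "last P \<in> set P"
    using P_nonempty by simp_all
  then have "hd P < length S" "last P < length S" "hd P \<le> last P"
    using P_terminal sorted_between_hd_last(2)[of P "hd P"] sorted_first_positions
    by (auto simp: strict_sorted_iff)
  moreover have "d (S ! hd P) \<le> hd P" and "d (S ! last P) \<le> walk_cost S - last P"
    using tour_nth_dist[OF S] \<open>hd P < length S\<close> \<open>last P < length S\<close> by auto
  ultimately show ?thesis
    using tour_length[OF S] by (simp add: segment_cost_def of_nat_diff)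
qed

lemma itp_optimal_offset:
  obtains i where "i \<in> {1..k}" and "itp E V dep k S = itp_solution E V dep k S i"
    and "\<And>j. j \<in> {1..k} \<Longrightarrow>
      sol_cost (itp_solution E V dep k S i) \<le> sol_cost (itp_solution E V dep k S j)"
proof -
  define i where "i = (ARG_MIN (\<lambda>i. sol_cost (itp_solution E V dep k S i)) i. i \<in> {1..k})"
  have "is_arg_min (\<lambda>i. sol_cost (itp_solution E V dep k S i)) (\<lambda>i. i \<in> {1..k}) i"
    unfolding i_def by (rule is_arg_min_arg_min_nat[of _ 1]) (use k_pos in auto)
  then show ?thesis
    using that[of i] by (simp add: itp_def i_def is_arg_min_linorder)
qed

lemma itp_feasible: "cvrp_feasible E V dep k (itp E V dep k S)"
  by (metis itp_optimal_offset itp_solution_feasible)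

lemma cvrp_opt_attained:
  obtains sol where "cvrp_feasible E V dep k sol" and "sol_cost sol = cvrp_opt E V dep k"
proof -
  have "\<exists>c sol. cvrp_feasible E V dep k sol \<and> sol_cost sol = c"
    using itp_feasible by blast
  then have "\<exists>sol. cvrp_feasible E V dep k sol \<and> sol_cost sol = cvrp_opt E V dep k"
    unfolding cvrp_opt_def by (rule LeastI_ex)
  then show ?thesis
    using that by blast
qed

lemma itp_cost_bound:
  "real k * sol_cost (itp E V dep k S) \<le> (real k - 1) * walk_cost S + 2 * (\<Sum>v\<in>V. real (d v))"
proof -
  obtain i where "i \<in> {1..k}" and itp: "itp E V dep k S = itp_solution E V dep k S i"
    and min: "\<And>j. j \<in> {1..k} \<Longrightarrow>
      sol_cost (itp_solution E V dep k S i) \<le> sol_cost (itp_solution E V dep k S j)"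
    using itp_optimal_offset by blast
  have "real k * sol_cost (itp E V dep k S) =
      (\<Sum>j\<in>{1..k}. real (sol_cost (itp_solution E V dep k S i)))"
    by (simp add: itp)
  also have "\<dots> \<le> (\<Sum>j\<in>{1..k}. real (sol_cost (itp_solution E V dep k S j)))"
    using min by (intro sum_mono) simp
  also have "\<dots> \<le> (real k - 1) * walk_cost S + 2 * (\<Sum>v\<in>V. real (d v))"
    unfolding sum_itp_solution_costs using segment_cost_le_walk_cost k_pos
    by (simp add: mult_left_mono)
  finally show ?thesis .
qed

end

theorem theorem2:
  fixes E :: "'a \<Rightarrow> 'a \<Rightarrow> bool" and V :: "'a set" and dep :: 'a
    and n k :: nat and \<beta> \<gamma> :: real and S :: "'a list"
  assumes "finite V" and "card V = n" and "dep \<notin> V"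
    and "\<forall>u v. E u v \<longrightarrow> E v u" and "\<forall>u. \<not> E u u"
    and "\<forall>u v. E u v \<longrightarrow> u \<in> insert dep V \<and> v \<in> insert dep V"
    and "connected_graph E V dep"
    and "1 \<le> k" and "k \<le> n"
    and "\<beta> \<ge> 1/2" and "\<gamma> \<ge> 0"
    and "tsp_tour E V dep S"
    and "real (walk_cost S) \<le> \<beta> * real n + \<gamma> * real (tsp_opt E V dep)"
  shows "cvrp_feasible E V dep k (itp E V dep k S) \<and>
         real (sol_cost (itp E V dep k S)) \<le> (\<beta> + \<gamma> + 1/2) * real (cvrp_opt E V dep k)"
proof -
  interpret itp_instance E V dep S k
    using assms by unfold_locales auto
  obtain sol where sol: "cvrp_feasible E V dep k sol" "sol_cost sol = cvrp_opt E V dep k"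
    by (rule cvrp_opt_attained)
  define opt where "opt = real (cvrp_opt E V dep k)"
  define D where "D = (\<Sum>v\<in>V. real (d v))"
  have "tsp_opt E V dep \<le> opt"
    using tsp_opt_le_sol_cost[OF sol(1)] sol(2) by (simp add: opt_def)
  then have tsp: "(real k - 1) * (\<gamma> * tsp_opt E V dep) \<le> real k * (\<gamma> * opt)"
    using \<open>\<gamma> \<ge> 0\<close> by (intro mult_mono mult_left_mono) auto
  have "real k * sol_cost (itp E V dep k S) \<le> (real k - 1) * walk_cost S + 2 * D"
    using itp_cost_bound by (simp add: D_def)
  also have "\<dots> \<le> (real k - 1) * (\<beta> * n + \<gamma> * tsp_opt E V dep) + 2 * D"
    using \<open>real (walk_cost S) \<le> \<beta> * real n + \<gamma> * real (tsp_opt E V dep)\<close> \<open>1 \<le> k\<close>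
    by (intro add_right_mono mult_left_mono) auto
  also have "\<dots> \<le> (\<beta> + 1/2) * k * opt + (real k - 1) * (\<gamma> * tsp_opt E V dep)"
    using cvrp_cost_lower_bound[OF sol(1) \<open>finite V\<close> \<open>dep \<notin> V\<close> \<open>\<beta> \<ge> 1/2\<close>] \<open>card V = n\<close> sol(2)
    by (simp add: D_def opt_def algebra_simps)
  also have "\<dots> \<le> real k * ((\<beta> + \<gamma> + 1/2) * opt)"
    using tsp by (simp add: algebra_simps)
  finally show ?thesis
    using itp_feasible \<open>1 \<le> k\<close> by (simp add: opt_def)
qed

end
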